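(* For every $r\ge3$, \[K_{A_r}(2\tilde\alpha_{A_r})=K_{C_r}(\tilde\alpha_{C_r}),\] where $2\tilde\alpha_{A_r}=2\varepsilon_1-2\varepsilon_{r+1}\in\mathbb{R}^{r+1}$ and $\tilde\alpha_{C_r}=2\varepsilon_1\in\mathbb{R}^r$.
   Context: $\Phi^+_{A_r}=\{\varepsilon_i-\varepsilon_j:1\le i<j\le r+1\}\subset\mathbb{R}^{r+1}$ and $\Phi^+_{C_r}=\{\varepsilon_i\pm\varepsilon_j:1\le i<j\le r\}\cup\{2\varepsilon_i:1\le i\le r\}\subset\mathbb{R}^r$. For a root system $X$, $K_X(\mu)$ is the number of finite multisets of elements of $\Phi^+_X$ summing to $\mu$. *)

theory Defs
  imports Complex_Main "HOL-Library.Multiset" "HOL-Library.Function_Algebras"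
begin

text \<open>Vectors of R^n are modelled as functions nat => real, coordinate k for 1 <= k <= n
  (all other coordinates are zero). eps i is the i-th standard basis vector.\<close>

definition eps :: "nat \<Rightarrow> (nat \<Rightarrow> real)" where
  "eps i = (\<lambda>k. if k = i then 1 else 0)"

definition posroots_A :: "nat \<Rightarrow> (nat \<Rightarrow> real) set" where
  "posroots_A r = {eps i - eps j | i j. 1 \<le> i \<and> i < j \<and> j \<le> r + 1}"

definition posroots_C :: "nat \<Rightarrow> (nat \<Rightarrow> real) set" where
  "posroots_C r =
     {eps i - eps j | i j. 1 \<le> i \<and> i < j \<and> j \<le> r}
   \<union> {eps i + eps j | i j. 1 \<le> i \<and> i < j \<and> j \<le> r}
   \<union> {eps i + eps i | i. 1 \<le> i \<and> i \<le> r}"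

definition kostant :: "(nat \<Rightarrow> real) set \<Rightarrow> (nat \<Rightarrow> real) \<Rightarrow> nat" where
  "kostant Phi mu = card {M :: (nat \<Rightarrow> real) multiset. set_mset M \<subseteq> Phi \<and> sum_mset M = mu}"

end

theory Submission
  imports Defs
begin

text \<open>
  Write \<open>D\<^sub>r\<close> for the roots \<open>\<epsilon>\<^sub>i - \<epsilon>\<^sub>j\<close>, \<open>1 \<le> i < j \<le> r\<close>, common to \<open>A\<^sub>r\<close> and \<open>C\<^sub>r\<close>.
  The other positive roots of \<open>A\<^sub>r\<close> are the \<open>\<epsilon>\<^sub>a - \<epsilon>\<^bsub>r+1\<^esub>\<close>, and the linear form
  \<open>v \<mapsto> v(r+1)\<close> is \<open>0\<close> on \<open>D\<^sub>r\<close> and \<open>-1\<close> on them; the other positive roots of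
  \<open>C\<^sub>r\<close> are the \<open>\<epsilon>\<^sub>a + \<epsilon>\<^sub>b\<close>, \<open>a \<le> b\<close>, and the coordinate sum over \<open>1..r\<close> is \<open>0\<close>
  on \<open>D\<^sub>r\<close> and \<open>2\<close> on them. So if \<open>\<mu>(r+1) = 0\<close> and the coordinates of \<open>\<mu>\<close> sum to
  \<open>2\<close>, every partition of \<open>\<mu> - 2\<epsilon>\<^bsub>r+1\<^esub>\<close> in \<open>A\<^sub>r\<close> is a partition over \<open>D\<^sub>r\<close> plus
  exactly two roots \<open>\<epsilon>\<^sub>a - \<epsilon>\<^bsub>r+1\<^esub>, \<epsilon>\<^sub>b - \<epsilon>\<^bsub>r+1\<^esub>\<close>, and every partition of
  \<open>\<mu>\<close> in \<open>C\<^sub>r\<close> is one over \<open>D\<^sub>r\<close> plus exactly one root \<open>\<epsilon>\<^sub>a + \<epsilon>\<^sub>b\<close>.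
  Exchanging these extra roots is a bijection; the theorem is the case \<open>\<mu> = 2\<epsilon>\<^sub>1\<close>.
\<close>

lemma additive_sum_mset_eq_size_outside:
  fixes \<phi> :: "'a::ab_group_add \<Rightarrow> real"
  assumes "additive \<phi>" and "set_mset M \<subseteq> \<Phi>"
    and "\<And>v. v \<in> \<Phi> \<Longrightarrow> v \<in> D \<Longrightarrow> \<phi> v = 0"
    and "\<And>v. v \<in> \<Phi> \<Longrightarrow> v \<notin> D \<Longrightarrow> \<phi> v = c"
  shows "\<phi> (sum_mset M) = of_nat (size (filter_mset (\<lambda>v. v \<notin> D) M)) * c"
  using assms(2)
proof (induction M)
  case empty
  show ?case using additive.zero[OF assms(1)] by simp
next
  case (add v M)
  then show ?case using assms(3,4) additive.add[OF assms(1)] by (auto simp: algebra_simps)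
qed

lemma additive_coord: "additive (\<lambda>v :: nat \<Rightarrow> real. v k)"
  by unfold_locales simp

lemma additive_coord_sum: "additive (\<lambda>v :: nat \<Rightarrow> real. \<Sum>k\<in>K. v k)"
  by unfold_locales (simp add: sum.distrib)

lemma size_eq_2_mset: "size N = 2 \<Longrightarrow> \<exists>x y. N = {#x, y#}"
  by (metis numeral_2_eq_2 size_mset_SucE size_1_singleton_mset One_nat_def add_mset_add_single union_commute)

lemma eps_apply [simp]: "eps i k = (if k = i then 1 else 0)"
  by (simp add: eps_def)

lemma eps_eq_iff [simp]: "eps a = eps b \<longleftrightarrow> a = b"
proof
  assume "eps a = eps b"
  then have "eps a a = eps b a" by simp
  then show "a = b" by (simp split: if_splits)
qed simp

lemma eps_add_eq_sortedD:
  assumes "eps a + eps b = eps c + eps d" and "a \<le> b" and "c \<le> d"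
  shows "a = c \<and> b = d"
  using fun_cong[OF assms(1), of a] fun_cong[OF assms(1), of b]
    fun_cong[OF assms(1), of c] fun_cong[OF assms(1), of d] assms(2,3)
  by (auto split: if_splits)

definition diff_roots :: "nat \<Rightarrow> (nat \<Rightarrow> real) set" where
  "diff_roots r = {eps i - eps j | i j. 1 \<le> i \<and> i < j \<and> j \<le> r}"

definition sum_roots :: "nat \<Rightarrow> (nat \<Rightarrow> real) set" where
  "sum_roots r = {eps a + eps b | a b. 1 \<le> a \<and> a \<le> b \<and> b \<le> r}"

lemma diff_roots_apply_above: "v \<in> diff_roots r \<Longrightarrow> r < k \<Longrightarrow> v k = 0"
  by (auto simp: diff_roots_def)

lemma eps_diff_last_notin_diff_roots: "a \<le> r \<Longrightarrow> eps a - eps (r + 1) \<notin> diff_roots r"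
  using diff_roots_apply_above[of "eps a - eps (r + 1)" r "r + 1"] by auto

lemma coord_sum_diff_roots: "v \<in> diff_roots r \<Longrightarrow> (\<Sum>k=1..r. v k) = 0"
  by (auto simp: diff_roots_def sum_subtractf)

lemma coord_sum_sum_roots: "v \<in> sum_roots r \<Longrightarrow> (\<Sum>k=1..r. v k) = 2"
  by (auto simp: sum_roots_def sum.distrib)

lemma sum_roots_notin_diff_roots: "v \<in> sum_roots r \<Longrightarrow> v \<notin> diff_roots r"
  using coord_sum_diff_roots coord_sum_sum_roots by fastforce

lemma posroots_A_eq: "posroots_A r = diff_roots r \<union> {eps a - eps (r + 1) | a. 1 \<le> a \<and> a \<le> r}"
proof -
  have "\<And>i j. (1 \<le> i \<and> i < j \<and> j \<le> r + 1) \<longleftrightarrow>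
      (1 \<le> i \<and> i < j \<and> j \<le> r) \<or> (1 \<le> i \<and> i \<le> r \<and> j = r + 1)"
    by auto
  then show ?thesis unfolding posroots_A_def diff_roots_def by blast
qed

lemma posroots_C_eq: "posroots_C r = diff_roots r \<union> sum_roots r"
proof -
  have "\<And>a b. (1 \<le> a \<and> a \<le> b \<and> b \<le> r) \<longleftrightarrow>
      (1 \<le> a \<and> a < b \<and> b \<le> r) \<or> (1 \<le> a \<and> a \<le> r \<and> b = a)"
    by auto
  then show ?thesis unfolding posroots_C_def diff_roots_def sum_roots_def by blast
qed

definition completions :: "nat \<Rightarrow> (nat \<Rightarrow> real) \<Rightarrow> ((nat \<Rightarrow> real) multiset \<times> nat \<times> nat) set" where
  "completions r \<mu> = {(M, a, b). set_mset M \<subseteq> diff_roots r \<and> 1 \<le> a \<and> a \<le> b \<and> b \<le> r \<and>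
     sum_mset M + eps a + eps b = \<mu>}"

definition attach_last :: "nat \<Rightarrow> (nat \<Rightarrow> real) multiset \<times> nat \<times> nat \<Rightarrow> (nat \<Rightarrow> real) multiset" where
  "attach_last r = (\<lambda>(M, a, b). M + {#eps a - eps (r + 1), eps b - eps (r + 1)#})"

definition attach_sum :: "(nat \<Rightarrow> real) multiset \<times> nat \<times> nat \<Rightarrow> (nat \<Rightarrow> real) multiset" where
  "attach_sum = (\<lambda>(M, a, b). add_mset (eps a + eps b) M)"

lemma inj_on_attach_last: "inj_on (attach_last r) (completions r \<mu>)"
proof (rule inj_onI)
  fix x y
  assume "x \<in> completions r \<mu>" "y \<in> completions r \<mu>" and eq_xy: "attach_last r x = attach_last r y"
  obtain M a b M' a' b' where xy: "x = (M, a, b)" "y = (M', a', b')"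
    by (cases x, cases y)
  with \<open>x \<in> completions r \<mu>\<close> \<open>y \<in> completions r \<mu>\<close> eq_xy
  have in1: "(M, a, b) \<in> completions r \<mu>" and in2: "(M', a', b') \<in> completions r \<mu>"
    and eq: "attach_last r (M, a, b) = attach_last r (M', a', b')"
    by simp_all
  have "filter_mset (\<lambda>v. v \<in> diff_roots r) (attach_last r (M, a, b)) = M"
    if "(M, a, b) \<in> completions r \<mu>" for M a b
    using that eps_diff_last_notin_diff_roots
    by (auto simp: attach_last_def completions_def filter_mset_eq_conv)
  from this[OF in1] this[OF in2] eq have M: "M = M'" by simp
  with eq have "{#eps a - eps (r + 1), eps b - eps (r + 1)#} = {#eps a' - eps (r + 1), eps b' - eps (r + 1)#}"
    by (simp add: attach_last_def add_mset_commute)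
  then have "(a = a' \<and> b = b') \<or> (a = b' \<and> b = a')"
    by (auto simp: add_eq_conv_diff)
  then show "x = y" using M in1 in2 xy by (auto simp: completions_def)
qed

lemma inj_on_attach_sum: "inj_on attach_sum (completions r \<mu>)"
proof (rule inj_onI)
  fix x y
  assume "x \<in> completions r \<mu>" "y \<in> completions r \<mu>" and eq_xy: "attach_sum x = attach_sum y"
  obtain M a b M' a' b' where xy: "x = (M, a, b)" "y = (M', a', b')"
    by (cases x, cases y)
  with \<open>x \<in> completions r \<mu>\<close> \<open>y \<in> completions r \<mu>\<close> eq_xy
  have in1: "(M, a, b) \<in> completions r \<mu>" and in2: "(M', a', b') \<in> completions r \<mu>"
    and eq: "attach_sum (M, a, b) = attach_sum (M', a', b')"
    by simp_all
  have "filter_mset (\<lambda>v. v \<in> diff_roots r) (attach_sum (M, a, b)) = M"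
    if "(M, a, b) \<in> completions r \<mu>" for M a b
    using that sum_roots_notin_diff_roots[of "eps a + eps b" r]
    by (auto simp: attach_sum_def completions_def sum_roots_def filter_mset_eq_conv simp del: eps_apply)
  from this[OF in1] this[OF in2] eq have M: "M = M'" by simp
  with eq have "eps a + eps b = eps a' + eps b'" by (simp add: attach_sum_def)
  then show "x = y"
    using M in1 in2 xy eps_add_eq_sortedD[of a b a' b'] by (auto simp: completions_def)
qed

lemma attach_last_image:
  assumes "\<mu> (r + 1) = 0"
  shows "attach_last r ` completions r \<mu> =
    {M. set_mset M \<subseteq> posroots_A r \<and> sum_mset M = \<mu> - eps (r + 1) - eps (r + 1)}"
proof (intro equalityI subsetI)
  fix M assume "M \<in> attach_last r ` completions r \<mu>"
  then obtain M' a b where "(M', a, b) \<in> completions r \<mu>" and M: "M = attach_last r (M', a, b)"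
    by auto
  then show "M \<in> {M. set_mset M \<subseteq> posroots_A r \<and> sum_mset M = \<mu> - eps (r + 1) - eps (r + 1)}"
    by (auto simp: completions_def attach_last_def posroots_A_eq)
next
  fix M assume "M \<in> {M. set_mset M \<subseteq> posroots_A r \<and> sum_mset M = \<mu> - eps (r + 1) - eps (r + 1)}"
  then have M_roots: "set_mset M \<subseteq> posroots_A r" and M_sum: "sum_mset M = \<mu> - eps (r + 1) - eps (r + 1)"
    by auto
  define M' where "M' = filter_mset (\<lambda>v. v \<in> diff_roots r) M"
  define N where "N = filter_mset (\<lambda>v. v \<notin> diff_roots r) M"
  have M_split: "M = M' + N" unfolding M'_def N_def by (rule multiset_partition)
  have N_last: "\<exists>a. 1 \<le> a \<and> a \<le> r \<and> v = eps a - eps (r + 1)" if "v \<in># N" for v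
    using that M_roots by (auto simp: N_def posroots_A_eq)
  have "sum_mset M (r + 1) = of_nat (size N) * (-1)"
    unfolding N_def
  proof (rule additive_sum_mset_eq_size_outside[OF additive_coord M_roots])
    show "v \<in> posroots_A r \<Longrightarrow> v \<notin> diff_roots r \<Longrightarrow> v (r + 1) = -1" for v
      by (auto simp: posroots_A_eq)
  qed (simp add: diff_roots_apply_above)
  with M_sum assms have "size N = 2" by simp
  then obtain x y where "N = {#x, y#}" using size_eq_2_mset by blast
  then obtain c d where "1 \<le> c" "c \<le> r" "1 \<le> d" "d \<le> r"
    and "N = {#eps c - eps (r + 1), eps d - eps (r + 1)#}"
    using N_last[of x] N_last[of y] by auto
  then obtain a b where "1 \<le> a" "a \<le> b" "b \<le> r"
    and N: "N = {#eps a - eps (r + 1), eps b - eps (r + 1)#}"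
    using that[of c d] that[of d c] by (cases "c \<le> d") (auto simp: add_mset_commute)
  have "sum_mset M = sum_mset M' + eps a + eps b - eps (r + 1) - eps (r + 1)"
    unfolding M_split N by (simp add: algebra_simps)
  with M_sum have "sum_mset M' + eps a + eps b = \<mu>" by (simp add: add.assoc)
  then have "(M', a, b) \<in> completions r \<mu>"
    using \<open>1 \<le> a\<close> \<open>a \<le> b\<close> \<open>b \<le> r\<close> by (auto simp: completions_def M'_def)
  moreover have "M = attach_last r (M', a, b)" by (simp add: attach_last_def M_split N)
  ultimately show "M \<in> attach_last r ` completions r \<mu>" by blast
qed

lemma attach_sum_image:
  assumes "(\<Sum>k=1..r. \<mu> k) = 2"
  shows "attach_sum ` completions r \<mu> = {M. set_mset M \<subseteq> posroots_C r \<and> sum_mset M = \<mu>}"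
proof (intro equalityI subsetI)
  fix M assume "M \<in> attach_sum ` completions r \<mu>"
  then obtain M' a b where "(M', a, b) \<in> completions r \<mu>" and M: "M = attach_sum (M', a, b)"
    by auto
  then show "M \<in> {M. set_mset M \<subseteq> posroots_C r \<and> sum_mset M = \<mu>}"
    by (auto simp: completions_def attach_sum_def posroots_C_eq sum_roots_def add.assoc simp del: eps_apply)
next
  fix M assume "M \<in> {M. set_mset M \<subseteq> posroots_C r \<and> sum_mset M = \<mu>}"
  then have M_roots: "set_mset M \<subseteq> posroots_C r" and M_sum: "sum_mset M = \<mu>"
    by auto
  define M' where "M' = filter_mset (\<lambda>v. v \<in> diff_roots r) M"
  define N where "N = filter_mset (\<lambda>v. v \<notin> diff_roots r) M"
  have M_split: "M = M' + N" unfolding M'_def N_def by (rule multiset_partition)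
  have "(\<Sum>k=1..r. sum_mset M k) = of_nat (size N) * 2"
    unfolding N_def
  proof (rule additive_sum_mset_eq_size_outside[OF additive_coord_sum M_roots])
    show "v \<in> posroots_C r \<Longrightarrow> v \<notin> diff_roots r \<Longrightarrow> (\<Sum>k=1..r. v k) = 2" for v
      using coord_sum_sum_roots by (auto simp only: posroots_C_eq Un_iff)
  qed (rule coord_sum_diff_roots)
  with M_sum assms have "size N = 1" by simp
  then obtain v where "N = {#v#}" using size_1_singleton_mset by blast
  moreover have "v \<in> sum_roots r"
    using M_roots \<open>N = {#v#}\<close> by (auto simp: N_def posroots_C_eq filter_mset_eq_conv)
  ultimately obtain a b where "1 \<le> a" "a \<le> b" "b \<le> r" and N: "N = {#eps a + eps b#}"
    by (auto simp: sum_roots_def simp del: eps_apply)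
  have "sum_mset M' + eps a + eps b = \<mu>"
    using M_sum unfolding M_split N by (simp add: add_ac)
  then have "(M', a, b) \<in> completions r \<mu>"
    using \<open>1 \<le> a\<close> \<open>a \<le> b\<close> \<open>b \<le> r\<close> by (auto simp: completions_def M'_def)
  moreover have "M = attach_sum (M', a, b)" by (simp add: attach_sum_def M_split N)
  ultimately show "M \<in> attach_sum ` completions r \<mu>" by blast
qed

theorem kostant_A_double_last_eq_kostant_C:
  assumes "\<mu> (r + 1) = 0" and "(\<Sum>k=1..r. \<mu> k) = 2"
  shows "kostant (posroots_A r) (\<mu> - eps (r + 1) - eps (r + 1)) = kostant (posroots_C r) \<mu>"
proof -
  have "kostant (posroots_A r) (\<mu> - eps (r + 1) - eps (r + 1)) = card (completions r \<mu>)"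
    unfolding kostant_def attach_last_image[where \<mu> = \<mu> and r = r, OF assms(1), symmetric]
    by (rule card_image[OF inj_on_attach_last])
  also have "\<dots> = kostant (posroots_C r) \<mu>"
    unfolding kostant_def attach_sum_image[OF assms(2), symmetric]
    by (rule card_image[OF inj_on_attach_sum, symmetric])
  finally show ?thesis .
qed

theorem mainTheorem15:
  fixes r :: nat
  assumes "r \<ge> 3"
  shows "kostant (posroots_A r) (eps 1 + eps 1 - eps (r + 1) - eps (r + 1))
       = kostant (posroots_C r) (eps 1 + eps 1)"
proof (rule kostant_A_double_last_eq_kostant_C)
  have "(\<Sum>k=1..r. eps 1 k) = 1" using assms by simp
  then show "(\<Sum>k=1..r. (eps 1 + eps 1) k) = 2" by (simp only: plus_fun_apply sum.distrib)
qed (use assms in simp)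

end
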